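(* (i) Let $\beta:\mathbb{Z}\to\mathbb{C}$ have convergent increments and let $d:\mathcal{A}\to A$ be the invariant derivation $d(a)=[\beta(\mathbb{K}),a]$. Then there exists an operator $D:\mathcal{D}\to\mathcal{H}$ such that $[D,\pi(a)]f=\pi(d(a))f$ and $U_\varphi DU_\varphi^{-1}f=Df$ for all $f\in\mathcal{D}$, $a\in\mathcal{A}$, $\varphi\in[0,2\pi)$. Moreover, every such $D$ has the form $Df=\beta(\mathbb{K})f-f\alpha(\mathbb{K})$ for some sequence $\alpha:\mathbb{Z}\to\mathbb{C}$. (ii) Let $\beta:\mathbb{Z}\to\mathbb{C}$ have convergent increments and let $d:\mathcal{A}\to A$ be the covariant derivation $d(a)=[U\beta(\mathbb{K}),a]$. Then there exists an operator $D:\mathcal{D}\to\mathcal{H}$ such that $[D,\pi(a)]f=\pi(d(a))f$ and $U_\varphi DU_\varphi^{-1}f=e^{i\varphi}Df$ for all $f\in\mathcal{D}$, $a\in\mathcal{A}$, $\varphi\in[0,2\pi)$. Moreover, every such $D$ has the form $Df=U\beta(\mathbb{K})f-fU\alpha(\mathbb{K})$ for some sequence $\alpha:\mathbb{Z}\to\mathbb{C}$.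
   Context: Let $\{E_k\}$ be the canonical basis of $\ell^2(\mathbb{Z})$, $UE_k=E_{k+1}$, $\mathbb{K}E_k=kE_k$, $a(\mathbb{K})E_k=a(k)E_k$. $A$ is the C$^*$-algebra generated by $U$ and all $a(\mathbb{K})$ with $a$ having finite limits at $\pm\infty$; $\mathcal{A}$ is the algebra of finite sums $\sum_nU^na_n(\mathbb{K})$ with each $a_n$ eventually constant (constant on $k\ge k_0$ and on $k\le-k_0$ for some $k_0$). A function $\beta$ has convergent increments if $k\mapsto\beta(k)-\beta(k-1)$ has finite limits as $k\to\pm\infty$. $\mathcal{H}$ is the Hilbert space of Hilbert–Schmidt operators on $\ell^2(\mathbb{Z})$ with $\langle f,g\rangle=\mathrm{tr}(f^*g)$, each $f$ uniquely $f=\sum_nU^nf_n(\mathbb{K})$ with $\sum_{n,k}|f_n(k)|^2<\infty$. $\mathcal{D}\subset\mathcal{H}$ is the dense subspace of finite sums with each $f_n$ finitely supported. $\pi(a)f=af$, $\pi'(a)f=fa$ for $a\in A$ (both preserve $\mathcal{D}$ for $a\in\mathcal{A}$). $U_\varphi f=\sum_ne^{in\varphi}U^nf_n(\mathbb{K})$ for $\varphi\in[0,2\pi)$. *)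

theory Defs
  imports "HOL-Analysis.Analysis" "HOL-Library.Function_Algebras"
begin

text \<open>Bounded (and Hilbert--Schmidt) operators on l2(Z) are represented by their
matrices w.r.t. the canonical basis: M j k is the coefficient of E_j in M E_k.\<close>

type_synonym mat = "int \<Rightarrow> int \<Rightarrow> complex"

definition mmult :: "mat \<Rightarrow> mat \<Rightarrow> mat" where
  "mmult A B = (\<lambda>j k. \<Sum>\<^sub>\<infinity>m. A j m * B m k)"

definition diagop :: "(int \<Rightarrow> complex) \<Rightarrow> mat" where
  "diagop a = (\<lambda>j k. if j = k then a k else 0)"

definition shiftU :: mat where
  "shiftU = (\<lambda>j k. if j = k + 1 then 1 else 0)"

definition Upow :: "int \<Rightarrow> mat" where
  "Upow n = (\<lambda>j k. if j = k + n then 1 else 0)"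

definition eventually_const :: "(int \<Rightarrow> complex) \<Rightarrow> bool" where
  "eventually_const a \<longleftrightarrow> (\<exists>k0. (\<forall>k\<ge>k0. a k = a k0) \<and> (\<forall>k\<le>-k0. a k = a (-k0)))"

definition calA :: "mat set" where
  "calA = {a. \<exists>N an. finite N \<and> (\<forall>n\<in>N. eventually_const (an n)) \<and>
                 a = (\<Sum>n\<in>N. mmult (Upow n) (diagop (an n)))}"

definition conv_incr :: "(int \<Rightarrow> complex) \<Rightarrow> bool" where
  "conv_incr \<beta> \<longleftrightarrow> (\<exists>L1 L2. ((\<lambda>k. \<beta> k - \<beta> (k - 1)) \<longlongrightarrow> L1) at_top \<and>
                              ((\<lambda>k. \<beta> k - \<beta> (k - 1)) \<longlongrightarrow> L2) at_bot)"

text \<open>Hilbert--Schmidt operators (the space H)\<close>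
definition HS :: "mat set" where
  "HS = {f. (\<lambda>(j,k). (cmod (f j k))\<^sup>2) summable_on (UNIV :: (int \<times> int) set)}"

text \<open>the dense subspace D: finitely supported matrices
  (finite sums sum_n U^n f_n(K) with f_n finitely supported)\<close>
definition calD :: "mat set" where
  "calD = {f. finite {(j,k). f j k \<noteq> 0}}"

text \<open>U_phi f = sum_n e^(i n phi) U^n f_n(K)\<close>
definition Uphi :: "real \<Rightarrow> mat \<Rightarrow> mat" where
  "Uphi \<phi> f = (\<lambda>j k. exp (\<i> * of_real (of_int (j - k) * \<phi>)) * f j k)"

definition op_DH :: "(mat \<Rightarrow> mat) \<Rightarrow> bool" where
  "op_DH D \<longleftrightarrow> (\<forall>f\<in>calD. D f \<in> HS) \<and>
     (\<forall>f\<in>calD. \<forall>g\<in>calD. D (f + g) = D f + D g) \<and>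
     (\<forall>f\<in>calD. \<forall>c. D (\<lambda>j k. c * f j k) = (\<lambda>j k. c * D f j k))"

definition commD :: "(mat \<Rightarrow> mat) \<Rightarrow> mat \<Rightarrow> mat \<Rightarrow> mat" where
  "commD D a f = D (mmult a f) - mmult a (D f)"

definition comm :: "mat \<Rightarrow> mat \<Rightarrow> mat" where
  "comm x y = mmult x y - mmult y x"

end

theory Submission
  imports Defs
begin

(* Both parts are the cases m = 0 and m = 1 of the derivation [U^m \<beta>(K), -] together with
   gauge covariance of degree m, i.e. U_\<phi> D U_\<phi>^-1 = e^(i m \<phi>) D.
   Existence: D f = U^m \<beta>(K) f - f U^m \<alpha>(K) works for every \<alpha>, because the \<alpha>-terms commute
   with left multiplication and the \<beta>-terms reproduce [U^m \<beta>(K), a] f after reindexing.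
   Uniqueness: D is determined by its values on the matrix units E_rq. Commuting D with the
   coordinate projections shows that D E_rq agrees with U^m \<beta>(K) E_rq outside row r; gauge
   covariance leaves only the entry (r, q - m) in row r; commuting D with U shows that the
   defect D E_rq - U^m \<beta>(K) E_rq at that entry does not depend on r, and it defines -\<alpha>(q - m). *)

lemma infsum_UNIV_eq_sum:
  fixes f :: "'a \<Rightarrow> 'b::{comm_monoid_add, t2_space}"
  assumes "finite F" "\<And>x. x \<notin> F \<Longrightarrow> f x = 0"
  shows "infsum f UNIV = sum f F"
  using infsum_cong_neutral[where S = UNIV and T = F and f = f and g = f] assms by simp

lemma mmult_eq_sum_rows:
  assumes "finite G" "\<And>l k. l \<notin> G \<Longrightarrow> g l k = 0"
  shows "mmult a g j k = (\<Sum>l\<in>G. a j l * g l k)"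
  unfolding mmult_def by (rule infsum_UNIV_eq_sum) (use assms in auto)

lemma mmult_diagop_left: "mmult (diagop b) X = (\<lambda>j k. b j * X j k)"
  unfolding mmult_def diagop_def by (intro ext, subst infsum_UNIV_eq_sum[where F = "{_}"]) auto

lemma mmult_diagop_right: "mmult X (diagop b) = (\<lambda>j k. X j k * b k)"
  unfolding mmult_def diagop_def by (intro ext, subst infsum_UNIV_eq_sum[where F = "{_}"]) auto

lemma mmult_Upow_left: "mmult (Upow n) X = (\<lambda>j k. X (j - n) k)"
  unfolding mmult_def Upow_def by (intro ext, subst infsum_UNIV_eq_sum[where F = "{_ - n}"]) auto

lemma mmult_Upow_right: "mmult X (Upow n) = (\<lambda>j k. X j (k + n))"
  unfolding mmult_def Upow_def by (intro ext, subst infsum_UNIV_eq_sum[where F = "{_ + n}"]) auto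

lemma shiftU_eq_Upow_1: "shiftU = Upow 1"
  unfolding shiftU_def Upow_def by simp

definition wshift :: "int \<Rightarrow> (int \<Rightarrow> complex) \<Rightarrow> mat" where
  "wshift m b = mmult (Upow m) (diagop b)"

lemma wshift_apply: "wshift m b j k = (if j = k + m then b k else 0)"
  by (simp add: wshift_def mmult_Upow_left diagop_def)

lemma mmult_wshift_left: "mmult (wshift m b) X = (\<lambda>j k. b (j - m) * X (j - m) k)"
  unfolding mmult_def wshift_apply
  by (intro ext, subst infsum_UNIV_eq_sum[where F = "{_ - m}"]) auto

lemma mmult_wshift_right: "mmult X (wshift m b) = (\<lambda>j k. X j (k + m) * b k)"
  unfolding mmult_def wshift_apply
  by (intro ext, subst infsum_UNIV_eq_sum[where F = "{_ + m}"]) auto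

lemma wshift_0: "wshift 0 b = diagop b"
  by (simp add: wshift_def mmult_Upow_left)

lemma mmult_shiftU_diagop: "mmult shiftU (diagop b) = wshift 1 b"
  by (simp add: wshift_def shiftU_eq_Upow_1)

definition matunit :: "int \<Rightarrow> int \<Rightarrow> mat" where
  "matunit r q = (\<lambda>j k. if j = r \<and> k = q then 1 else 0)"

lemma mmult_matunit_right: "mmult X (matunit r q) = (\<lambda>j k. if k = q then X j r else 0)"
  unfolding mmult_def matunit_def by (intro ext, subst infsum_UNIV_eq_sum[where F = "{r}"]) auto

lemma mmult_shiftU_matunit: "mmult shiftU (matunit r q) = matunit (r + 1) q"
  by (auto simp: shiftU_eq_Upow_1 mmult_Upow_left matunit_def intro!: ext)

definition coord_proj :: "int \<Rightarrow> mat" where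
  "coord_proj p = diagop (\<lambda>j. if j = p then 1 else 0)"

lemma coord_proj_calA: "coord_proj p \<in> calA"
proof -
  have "eventually_const (\<lambda>j. if j = p then 1 else 0)"
    unfolding eventually_const_def by (rule exI[of _ "\<bar>p\<bar> + 1"]) auto
  moreover have "coord_proj p = (\<Sum>n\<in>{0}. mmult (Upow n) (diagop (\<lambda>j. if j = p then 1 else 0)))"
    by (simp add: coord_proj_def mmult_Upow_left)
  ultimately show ?thesis
    unfolding calA_def by (intro CollectI exI[of _ "{0}"] exI[of _ "\<lambda>_ j. if j = p then 1 else 0"]) simp
qed

lemma shiftU_calA: "shiftU \<in> calA"
proof -
  have "eventually_const (\<lambda>_. 1)"
    unfolding eventually_const_def by simp
  moreover have "shiftU = (\<Sum>n\<in>{1}. mmult (Upow n) (diagop (\<lambda>_. 1)))"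
    by (auto simp: shiftU_def mmult_Upow_left diagop_def intro!: ext)
  ultimately show ?thesis
    unfolding calA_def by (intro CollectI exI[of _ "{1}"] exI[of _ "\<lambda>_ _. 1"]) simp
qed

lemma calD_if_support_subset:
  assumes "f \<in> calD" "\<And>j k. g j k \<noteq> 0 \<Longrightarrow> f j k \<noteq> 0"
  shows "g \<in> calD"
  using assms unfolding calD_def by (auto intro: finite_subset[rotated])

lemma calD_imp_HS:
  assumes "f \<in> calD"
  shows "f \<in> HS"
proof -
  have "{x. (\<lambda>(j, k). (cmod (f j k))\<^sup>2) x \<noteq> 0} \<subseteq> {(j, k). f j k \<noteq> 0}"
    by auto
  then show ?thesis
    using assms unfolding calD_def HS_def
    by (auto intro: finite_nonzero_values_imp_summable_on finite_subset)
qed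

lemma calD_finite_rows:
  assumes "f \<in> calD"
  obtains F where "finite F" "\<And>l k. l \<notin> F \<Longrightarrow> f l k = 0"
proof
  show "finite (fst ` {(j, k). f j k \<noteq> 0})"
    using assms unfolding calD_def by simp
  show "f l k = 0" if "l \<notin> fst ` {(j, k). f j k \<noteq> 0}" for l k
    using that by force
qed

lemma matunit_calD: "matunit r q \<in> calD"
proof -
  have "{(j, k). matunit r q j k \<noteq> 0} = {(r, q)}"
    unfolding matunit_def by auto
  then show ?thesis
    unfolding calD_def by simp
qed

definition wshift_comm :: "int \<Rightarrow> (int \<Rightarrow> complex) \<Rightarrow> (int \<Rightarrow> complex) \<Rightarrow> mat \<Rightarrow> mat" where
  "wshift_comm m \<beta> \<alpha> f = mmult (wshift m \<beta>) f - mmult f (wshift m \<alpha>)"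

lemma wshift_comm_apply:
  "wshift_comm m \<beta> \<alpha> f j k = \<beta> (j - m) * f (j - m) k - f j (k + m) * \<alpha> k"
  by (simp add: wshift_comm_def mmult_wshift_left mmult_wshift_right)

lemma wshift_comm_calD:
  assumes f: "f \<in> calD"
  shows "wshift_comm m \<beta> \<alpha> f \<in> calD"
proof -
  define S where "S = {(j, k). f j k \<noteq> 0}"
  have "(j, k) \<in> (\<lambda>(j, k). (j + m, k)) ` S \<union> (\<lambda>(j, k). (j, k - m)) ` S"
    if "wshift_comm m \<beta> \<alpha> f j k \<noteq> 0" for j k
  proof -
    have "(j - m, k) \<in> S \<or> (j, k + m) \<in> S"
      using that by (auto simp: S_def wshift_comm_apply)
    then show ?thesis
      by (auto intro: rev_image_eqI)
  qed
  then have "{(j, k). wshift_comm m \<beta> \<alpha> f j k \<noteq> 0} \<subseteq> (\<lambda>(j, k). (j + m, k)) ` S \<union> (\<lambda>(j, k). (j, k - m)) ` S"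
    by auto
  moreover have "finite S"
    using f by (simp add: S_def calD_def)
  ultimately show ?thesis
    unfolding calD_def by (auto intro: finite_subset)
qed

lemma op_DH_wshift_comm: "op_DH (wshift_comm m \<beta> \<alpha>)"
  unfolding op_DH_def
  by (auto simp: wshift_comm_calD calD_imp_HS wshift_comm_apply algebra_simps intro!: ext)

definition gauge_covariant :: "int \<Rightarrow> (mat \<Rightarrow> mat) \<Rightarrow> bool" where
  "gauge_covariant m D \<longleftrightarrow> (\<forall>f\<in>calD. \<forall>\<phi>\<in>{0..<2*pi}.
     Uphi \<phi> (D (Uphi (-\<phi>) f)) = (\<lambda>j k. exp (\<i> * of_real (of_int m * \<phi>)) * D f j k))"

lemma exp_i_of_int_mult_diff:
  "exp (\<i> * of_real (of_int a * \<phi>)) * exp (\<i> * of_real (of_int b * - \<phi>)) =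
   exp (\<i> * of_real (of_int (a - b) * \<phi>))"
  by (simp add: exp_add[symmetric] algebra_simps)

lemma gauge_covariant_wshift_comm: "gauge_covariant m (wshift_comm m \<beta> \<alpha>)"
proof -
  have regroup: "e * (b * (e1 * x) - e2 * y * a) = b * x * (e * e1) - y * a * (e * e2)"
    for e e1 e2 a b x y :: complex
    by (simp add: algebra_simps)
  have "exp (\<i> * of_real (of_int (j - k) * \<phi>)) * exp (\<i> * of_real (of_int (j - m - k) * - \<phi>)) =
        exp (\<i> * of_real (of_int m * \<phi>))"
    "exp (\<i> * of_real (of_int (j - k) * \<phi>)) * exp (\<i> * of_real (of_int (j - (k + m)) * - \<phi>)) =
        exp (\<i> * of_real (of_int m * \<phi>))" for j k :: int and \<phi> :: real
    by (simp_all only: exp_i_of_int_mult_diff) simp_all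
  then show ?thesis
    unfolding gauge_covariant_def Uphi_def wshift_comm_apply regroup
    by (simp add: algebra_simps)
qed

definition implements_derivation :: "mat \<Rightarrow> (mat \<Rightarrow> mat) \<Rightarrow> bool" where
  "implements_derivation \<delta> D \<longleftrightarrow> (\<forall>f\<in>calD. \<forall>a\<in>calA. commD D a f = mmult (comm \<delta> a) f)"

lemma commD_wshift_comm:
  assumes f: "f \<in> calD"
  shows "commD (wshift_comm m \<beta> \<alpha>) a f = mmult (comm (wshift m \<beta>) a) f"
proof (intro ext)
  fix j k
  obtain F where F: "finite F" and f_F: "\<And>l k. l \<notin> F \<Longrightarrow> f l k = 0"
    using calD_finite_rows[OF f] by blast
  define G where "G = F \<union> (\<lambda>l. l + m) ` F"
  have G: "finite G"
    using F by (simp add: G_def)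
  have f_G: "f l k = 0" and f_G_shift: "f (l - m) k = 0" if "l \<notin> G" for l k
    using that f_F by (force simp: G_def)+
  have Df_G: "wshift_comm m \<beta> \<alpha> f l k = 0" if "l \<notin> G" for l k
    using that by (simp add: wshift_comm_apply f_G f_G_shift)
  have reindex: "(\<Sum>l\<in>G. a j (l + m) * \<beta> l * f l k) = (\<Sum>l\<in>G. a j l * (\<beta> (l - m) * f (l - m) k))"
  proof -
    have "(\<Sum>l\<in>G. a j (l + m) * \<beta> l * f l k) = (\<Sum>\<^sub>\<infinity>l. a j (l + m) * \<beta> l * f l k)"
      by (rule infsum_UNIV_eq_sum[OF G, symmetric]) (simp add: f_G)
    also have "\<dots> = (\<Sum>\<^sub>\<infinity>l. a j l * (\<beta> (l - m) * f (l - m) k))"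
      by (rule infsum_reindex_bij_witness[where i = "\<lambda>l. l - m" and j = "\<lambda>l. l + m"]) auto
    also have "\<dots> = (\<Sum>l\<in>G. a j l * (\<beta> (l - m) * f (l - m) k))"
      by (rule infsum_UNIV_eq_sum[OF G]) (simp add: f_G_shift)
    finally show ?thesis .
  qed
  have "commD (wshift_comm m \<beta> \<alpha>) a f j k =
      \<beta> (j - m) * (\<Sum>l\<in>G. a (j - m) l * f l k) - (\<Sum>l\<in>G. a j l * f l (k + m)) * \<alpha> k
      - (\<Sum>l\<in>G. a j l * (\<beta> (l - m) * f (l - m) k - f l (k + m) * \<alpha> k))"
    by (simp add: commD_def wshift_comm_apply mmult_eq_sum_rows[OF G f_G] mmult_eq_sum_rows[OF G Df_G])
  also have "\<dots> = \<beta> (j - m) * (\<Sum>l\<in>G. a (j - m) l * f l k) - (\<Sum>l\<in>G. a j l * (\<beta> (l - m) * f (l - m) k))"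
    by (simp add: sum_distrib_left sum_distrib_right sum_subtractf algebra_simps)
  also have "\<dots> = \<beta> (j - m) * (\<Sum>l\<in>G. a (j - m) l * f l k) - (\<Sum>l\<in>G. a j (l + m) * \<beta> l * f l k)"
    by (simp only: reindex)
  also have "\<dots> = (\<Sum>l\<in>G. (\<beta> (j - m) * a (j - m) l - a j (l + m) * \<beta> l) * f l k)"
    by (simp add: sum_distrib_left sum_subtractf algebra_simps)
  also have "\<dots> = mmult (comm (wshift m \<beta>) a) f j k"
    by (simp add: mmult_eq_sum_rows[OF G f_G] comm_def mmult_wshift_left mmult_wshift_right)
  finally show "commD (wshift_comm m \<beta> \<alpha>) a f j k = mmult (comm (wshift m \<beta>) a) f j k" .
qed

lemma implements_derivation_wshift_comm:
  "implements_derivation (wshift m \<beta>) (wshift_comm m \<beta> \<alpha>)"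
  by (simp add: implements_derivation_def commD_wshift_comm)

lemma op_DH_zero:
  assumes "op_DH D"
  shows "D 0 = 0"
proof -
  have "(0::mat) \<in> calD"
    by (simp add: calD_def)
  then have "D (\<lambda>j k. 0 * (0::mat) j k) = (\<lambda>j k. 0 * D 0 j k)"
    using assms unfolding op_DH_def by blast
  then show ?thesis
    by (simp add: zero_fun_def)
qed

lemma op_DH_eq_on_calD:
  assumes D: "op_DH D" and D': "op_DH D'"
    and units: "\<And>r q. D (matunit r q) = D' (matunit r q)"
    and f: "f \<in> calD"
  shows "D f = D' f"
proof -
  have "D f = D' f" if "finite S" "{(j, k). f j k \<noteq> 0} \<subseteq> S" for S f
    using that
  proof (induction S arbitrary: f rule: finite_induct)
    case empty
    then have "f = 0"
      by (auto intro!: ext)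
    then show ?case
      using op_DH_zero[OF D] op_DH_zero[OF D'] by metis
  next
    case (insert s S)
    obtain r q where s: "s = (r, q)"
      by force
    define g where "g = (\<lambda>j k. if j = r \<and> k = q then 0 else f j k)"
    define h where "h = (\<lambda>j k. f r q * matunit r q j k)"
    have "f \<in> calD"
      using insert.hyps insert.prems unfolding calD_def by (auto intro: finite_subset)
    then have g: "g \<in> calD"
      by (rule calD_if_support_subset) (simp add: g_def split: if_splits)
    have "D g = D' g"
      using insert.prems s by (intro insert.IH) (auto simp: g_def)
    moreover have "D h = D' h"
      using D D' matunit_calD units unfolding op_DH_def h_def by metis
    moreover have "h \<in> calD"
      unfolding h_def by (rule calD_if_support_subset[OF matunit_calD]) auto
    moreover have "f = g + h"
      by (auto simp: g_def h_def matunit_def intro!: ext)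
    ultimately show ?case
      using D D' g unfolding op_DH_def by metis
  qed
  then show ?thesis
    using f unfolding calD_def by blast
qed

lemma implements_off_row:
  assumes D: "op_DH D" and impl: "implements_derivation \<delta> D" and "j \<noteq> r"
  shows "D (matunit r q) j k = mmult \<delta> (matunit r q) j k"
proof -
  have "commD D (coord_proj j) (matunit r q) = mmult (comm \<delta> (coord_proj j)) (matunit r q)"
    using impl coord_proj_calA matunit_calD by (simp add: implements_derivation_def)
  moreover have "mmult (coord_proj j) (matunit r q) = 0"
    using \<open>j \<noteq> r\<close> by (auto simp: coord_proj_def mmult_diagop_left matunit_def intro!: ext)
  ultimately have "- mmult (coord_proj j) (D (matunit r q)) = mmult (comm \<delta> (coord_proj j)) (matunit r q)"
    using op_DH_zero[OF D] by (simp add: commD_def)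
  then have "- mmult (coord_proj j) (D (matunit r q)) j k = mmult (comm \<delta> (coord_proj j)) (matunit r q) j k"
    by (metis uminus_apply)
  then show ?thesis
    using \<open>j \<noteq> r\<close>
    by (auto simp: coord_proj_def mmult_diagop_left mmult_diagop_right comm_def mmult_matunit_right fun_diff_def)
qed

lemma int_eq_0_if_exp_i_mult_eq_1:
  fixes n :: int
  assumes "\<And>\<phi>. \<phi> \<in> {0..<2*pi} \<Longrightarrow> exp (\<i> * of_real (of_int n * \<phi>)) = 1"
  shows "n = 0"
proof (rule ccontr)
  assume "n \<noteq> 0"
  then have "\<bar>real_of_int n\<bar> \<ge> 1"
    by linarith
  then have "pi / \<bar>of_int n\<bar> \<le> pi / 1"
    by (intro divide_left_mono) auto
  then have "pi / \<bar>of_int n\<bar> \<in> {0..<2*pi}"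
    unfolding atLeastLessThan_iff using pi_gt_zero by (intro conjI) (simp, linarith)
  moreover have "of_int n * (pi / \<bar>of_int n\<bar>) = sgn (of_int n) * pi"
    using \<open>n \<noteq> 0\<close> by (simp add: sgn_if)
  ultimately have "exp (\<i> * of_real (sgn (of_int n) * pi)) = 1"
    using assms by metis
  then show False
    using \<open>n \<noteq> 0\<close> by (simp add: sgn_if exp_minus split: if_splits)
qed

lemma gauge_covariant_support:
  assumes D: "op_DH D" and cov: "gauge_covariant m D" and nz: "D (matunit r q) j k \<noteq> 0"
  shows "j - k = r - q + m"
proof -
  have "exp (\<i> * of_real (of_int (j - k - (r - q) - m) * \<phi>)) = 1" if "\<phi> \<in> {0..<2*pi}" for \<phi>
  proof -
    have "Uphi (-\<phi>) (matunit r q) = (\<lambda>j k. exp (\<i> * of_real (of_int (r - q) * - \<phi>)) * matunit r q j k)"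
      by (auto simp: Uphi_def matunit_def intro!: ext)
    then have "D (Uphi (-\<phi>) (matunit r q)) = (\<lambda>j k. exp (\<i> * of_real (of_int (r - q) * - \<phi>)) * D (matunit r q) j k)"
      using D matunit_calD unfolding op_DH_def by simp
    then have "Uphi \<phi> (D (Uphi (-\<phi>) (matunit r q))) j k =
        exp (\<i> * of_real (of_int (j - k) * \<phi>)) * exp (\<i> * of_real (of_int (r - q) * - \<phi>)) * D (matunit r q) j k"
      by (simp add: Uphi_def)
    also have "\<dots> = exp (\<i> * of_real (of_int (j - k - (r - q)) * \<phi>)) * D (matunit r q) j k"
      by (simp only: exp_i_of_int_mult_diff)
    finally have shifted: "exp (\<i> * of_real (of_int (j - k - (r - q)) * \<phi>)) = exp (\<i> * of_real (of_int m * \<phi>))"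
      using cov that matunit_calD nz unfolding gauge_covariant_def by auto
    have "exp (\<i> * of_real (of_int (j - k - (r - q) - m) * \<phi>)) =
        exp (\<i> * of_real (of_int (j - k - (r - q)) * \<phi>)) * exp (\<i> * of_real (of_int m * - \<phi>))"
      by (rule exp_i_of_int_mult_diff[symmetric])
    also have "\<dots> = exp (\<i> * of_real (of_int m * \<phi>)) * exp (\<i> * of_real (of_int m * - \<phi>))"
      by (simp only: shifted)
    also have "\<dots> = 1"
      by (simp only: exp_i_of_int_mult_diff) simp
    finally show ?thesis .
  qed
  then have "j - k - (r - q) - m = 0"
    by (rule int_eq_0_if_exp_i_mult_eq_1)
  then show ?thesis
    by simp
qed

lemma implements_shift_step:
  assumes "implements_derivation \<delta> D"
  shows "D (matunit (r + 1) q) - mmult \<delta> (matunit (r + 1) q) =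
         mmult shiftU (D (matunit r q) - mmult \<delta> (matunit r q))"
proof -
  have "commD D shiftU (matunit r q) = mmult (comm \<delta> shiftU) (matunit r q)"
    using assms shiftU_calA matunit_calD by (simp add: implements_derivation_def)
  moreover have "mmult (comm \<delta> shiftU) (matunit r q) =
      mmult \<delta> (matunit (r + 1) q) - mmult shiftU (mmult \<delta> (matunit r q))"
    by (auto simp: comm_def mmult_matunit_right shiftU_eq_Upow_1 mmult_Upow_left mmult_Upow_right intro!: ext)
  ultimately have comm_eq: "D (matunit (r + 1) q) - mmult shiftU (D (matunit r q)) =
      mmult \<delta> (matunit (r + 1) q) - mmult shiftU (mmult \<delta> (matunit r q))"
    by (simp add: commD_def mmult_shiftU_matunit)
  have shift_diff: "mmult shiftU (X - Y) = mmult shiftU X - mmult shiftU Y" for X Y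
    by (auto simp: shiftU_eq_Upow_1 mmult_Upow_left intro!: ext)
  show ?thesis
    unfolding shift_diff using comm_eq by (simp add: algebra_simps)
qed

lemma implementation_unique:
  assumes D: "op_DH D" and impl: "implements_derivation (wshift m \<beta>) D" and cov: "gauge_covariant m D"
  shows "\<exists>\<alpha>. \<forall>f\<in>calD. D f = wshift_comm m \<beta> \<alpha> f"
proof -
  define y where "y r q = D (matunit r q) r (q - m) - mmult (wshift m \<beta>) (matunit r q) r (q - m)" for r q
  have y_step: "y (r + 1) q = y r q" for r q
    using fun_cong[OF fun_cong[OF implements_shift_step[OF impl, of r q]], of "r + 1" "q - m"]
    by (simp add: y_def shiftU_eq_Upow_1 mmult_Upow_left)
  have y_const: "y r q = y 0 q" for r q
  proof (induction r rule: int_induct[where k = 0])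
    case (step1 i)
    then show ?case by (simp add: y_step)
  next
    case (step2 i)
    then show ?case using y_step[of "i - 1" q] by simp
  qed simp
  define \<alpha> where "\<alpha> k = - y 0 (k + m)" for k
  have "D (matunit r q) = wshift_comm m \<beta> \<alpha> (matunit r q)" for r q
  proof (intro ext)
    fix j k
    consider "j \<noteq> r" | "j = r" "k = q - m" | "j = r" "k \<noteq> q - m"
      by blast
    then show "D (matunit r q) j k = wshift_comm m \<beta> \<alpha> (matunit r q) j k"
    proof cases
      case 1
      then show ?thesis
        using implements_off_row[OF D impl 1]
        by (simp add: wshift_comm_def mmult_wshift_right matunit_def)
    next
      case 2
      have "D (matunit r q) r (q - m) = mmult (wshift m \<beta>) (matunit r q) r (q - m) + y 0 q"
        using y_const[of r q] by (simp add: y_def algebra_simps)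
      then show ?thesis
        using 2 by (simp add: \<alpha>_def wshift_comm_def mmult_wshift_right matunit_def)
    next
      case 3
      then have "D (matunit r q) j k = 0"
        using gauge_covariant_support[OF D cov] by force
      then show ?thesis
        using 3 by (auto simp: wshift_comm_apply matunit_def)
    qed
  qed
  then show ?thesis
    using op_DH_eq_on_calD[OF D op_DH_wshift_comm] by blast
qed

theorem mainTheorem16:
  shows
   "(\<forall>\<beta>. conv_incr \<beta> \<longrightarrow>
      (let d = (\<lambda>a. comm (diagop \<beta>) a);
           good = (\<lambda>D. op_DH D \<and>
              (\<forall>f\<in>calD. \<forall>a\<in>calA. commD D a f = mmult (d a) f) \<and>
              (\<forall>f\<in>calD. \<forall>\<phi>\<in>{0..<2*pi}. Uphi \<phi> (D (Uphi (-\<phi>) f)) = D f))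
       in (\<exists>D. good D) \<and>
          (\<forall>D. good D \<longrightarrow> (\<exists>\<alpha>. \<forall>f\<in>calD.
              D f = mmult (diagop \<beta>) f - mmult f (diagop \<alpha>)))))
    \<and>
    (\<forall>\<beta>. conv_incr \<beta> \<longrightarrow>
      (let d = (\<lambda>a. comm (mmult shiftU (diagop \<beta>)) a);
           good = (\<lambda>D. op_DH D \<and>
              (\<forall>f\<in>calD. \<forall>a\<in>calA. commD D a f = mmult (d a) f) \<and>
              (\<forall>f\<in>calD. \<forall>\<phi>\<in>{0..<2*pi}.
                  Uphi \<phi> (D (Uphi (-\<phi>) f)) = (\<lambda>j k. exp (\<i> * of_real \<phi>) * D f j k)))
       in (\<exists>D. good D) \<and>
          (\<forall>D. good D \<longrightarrow> (\<exists>\<alpha>. \<forall>f\<in>calD.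
              D f = mmult (mmult shiftU (diagop \<beta>)) f - mmult f (mmult shiftU (diagop \<alpha>))))))"
proof -
  have implementations:
    "(\<exists>D. op_DH D \<and> implements_derivation (wshift m \<beta>) D \<and> gauge_covariant m D) \<and>
     (\<forall>D. op_DH D \<and> implements_derivation (wshift m \<beta>) D \<and> gauge_covariant m D \<longrightarrow>
        (\<exists>\<alpha>. \<forall>f\<in>calD. D f = mmult (wshift m \<beta>) f - mmult f (wshift m \<alpha>)))" for m \<beta>
    using op_DH_wshift_comm implements_derivation_wshift_comm gauge_covariant_wshift_comm
      implementation_unique
    unfolding wshift_comm_def by blast
  have "gauge_covariant 0 D \<longleftrightarrow> (\<forall>f\<in>calD. \<forall>\<phi>\<in>{0..<2*pi}. Uphi \<phi> (D (Uphi (-\<phi>) f)) = D f)"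
    and "gauge_covariant 1 D \<longleftrightarrow> (\<forall>f\<in>calD. \<forall>\<phi>\<in>{0..<2*pi}.
           Uphi \<phi> (D (Uphi (-\<phi>) f)) = (\<lambda>j k. exp (\<i> * of_real \<phi>) * D f j k))" for D
    by (simp_all add: gauge_covariant_def)
  then show ?thesis
    using implementations[of 0] implementations[of 1]
    by (simp add: Let_def implements_derivation_def wshift_0 mmult_shiftU_diagop)
qed

end
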